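(* Let $A$ and $B$ be complex Hilbert spaces and $n\geq 2$. Let $\vec{\beta}=(\beta_1,\ldots,\beta_n)\in\mathcal{B}_n$. Then for all bounded operators $M_1,\ldots,M_n:A\rightarrow B$ and all positive semidefinite trace class operators $\rho$ on $A$, \[ \left(\sum_{i=1}^n M_i\right)\rho\left(\sum_{i=1}^n M_i\right)^\dagger \geq \sum_{i=1}^n \beta_i M_i\rho M_i^\dagger . \]
   Context: $\mathcal{B}_n := \{\vec{\beta}\in\mathbb{R}^n : \operatorname{diag}(\vec{\beta}) \leq J\}$, where $\operatorname{diag}(\vec{\beta})$ is the $n\times n$ diagonal matrix with entries $\beta_i$, $J$ is the $n\times n$ all-ones matrix, and $\leq$ denotes the Löwner (positive semidefinite) order. All operator inequalities are in the Löwner order. *)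

theory Defs
  imports "HOL-Analysis.Analysis"
begin

text \<open>A complex Hilbert space: a (real) Banach space carrying a complex scalar
multiplication compatible with the real one, and a complex inner product
(linear in the second argument, conjugate-linear in the first) inducing the norm.\<close>

class complex_hilbert = banach +
  fixes scaleC :: "complex \<Rightarrow> 'a \<Rightarrow> 'a"
    and cinner :: "'a \<Rightarrow> 'a \<Rightarrow> complex"
  assumes scaleC_add_right: "scaleC a (x + y) = scaleC a x + scaleC a y"
    and scaleC_add_left: "scaleC (a + b) x = scaleC a x + scaleC b x"
    and scaleC_scaleC: "scaleC a (scaleC b x) = scaleC (a * b) x"
    and scaleC_one: "scaleC 1 x = x"
    and scaleR_scaleC: "scaleR r x = scaleC (complex_of_real r) x"
    and cinner_commute: "cinner x y = cnj (cinner y x)"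
    and cinner_add_right: "cinner x (y + z) = cinner x y + cinner x z"
    and cinner_scaleC_right: "cinner x (scaleC a y) = a * cinner x y"
    and cinner_self_norm: "cinner x x = complex_of_real ((norm x)\<^sup>2)"

definition bounded_clinear :: "('a::complex_hilbert \<Rightarrow> 'b::complex_hilbert) \<Rightarrow> bool" where
  "bounded_clinear f \<longleftrightarrow>
     (\<forall>x y. f (x + y) = f x + f y) \<and>
     (\<forall>c x. f (scaleC c x) = scaleC c (f x)) \<and>
     (\<exists>K. \<forall>x. norm (f x) \<le> norm x * K)"

definition cadjoint :: "('a::complex_hilbert \<Rightarrow> 'b::complex_hilbert) \<Rightarrow> 'b \<Rightarrow> 'a" where
  "cadjoint f = (\<lambda>y. THE z. \<forall>x. cinner (f x) y = cinner x z)"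

definition positive_op :: "('a::complex_hilbert \<Rightarrow> 'a) \<Rightarrow> bool" where
  "positive_op T \<longleftrightarrow> (\<forall>x. Im (cinner x (T x)) = 0 \<and> 0 \<le> Re (cinner x (T x)))"

definition loewner_le :: "('a::complex_hilbert \<Rightarrow> 'a) \<Rightarrow> ('a \<Rightarrow> 'a) \<Rightarrow> bool" where
  "loewner_le X Y \<longleftrightarrow> positive_op (\<lambda>x. Y x - X x)"

definition orthonormal_basis :: "'a::complex_hilbert set \<Rightarrow> bool" where
  "orthonormal_basis E \<longleftrightarrow>
     (\<forall>e\<in>E. norm e = 1) \<and> (\<forall>e\<in>E. \<forall>f\<in>E. e \<noteq> f \<longrightarrow> cinner e f = 0) \<and>
     (\<forall>x. (\<forall>e\<in>E. cinner e x = 0) \<longrightarrow> x = 0)"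

definition pos_trace_class :: "('a::complex_hilbert \<Rightarrow> 'a) \<Rightarrow> bool" where
  "pos_trace_class \<rho> \<longleftrightarrow> bounded_clinear \<rho> \<and> positive_op \<rho> \<and>
     (\<exists>E. orthonormal_basis E \<and> (\<lambda>e. Re (cinner e (\<rho> e))) summable_on E)"

definition psd_mat :: "nat \<Rightarrow> (nat \<Rightarrow> nat \<Rightarrow> real) \<Rightarrow> bool" where
  "psd_mat n A \<longleftrightarrow> (\<forall>x :: nat \<Rightarrow> real. 0 \<le> (\<Sum>i<n. \<Sum>j<n. x i * A i j * x j))"

text \<open>\<open>\<B>\<^sub>n = {\<beta>. diag \<beta> \<le> J}\<close>, i.e. \<open>J - diag \<beta>\<close> is PSD; \<open>\<beta>\<close> indexed by \<open>0..<n\<close>.\<close>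
definition beta_set :: "nat \<Rightarrow> (nat \<Rightarrow> real) set" where
  "beta_set n = {\<beta>. psd_mat n (\<lambda>i j. 1 - (if i = j then \<beta> i else 0))}"

end

(*
  Write z_i for the adjoint of M_i applied to y and w = z_1 + ... + z_n. Then
  <y, (RHS - LHS) y> = <w, rho w> - sum_i beta_i <z_i, rho z_i>, whose real part is the
  Frobenius product of J - diag beta with the Gram matrix G_ij = Re <z_i, rho z_j>. Both
  matrices are positive semidefinite, so the product is nonnegative; this is proved by
  induction on the size, splitting off a rank-one term via the Schur complement of the
  last diagonal entry. Adjoints exist by the Riesz representation theorem, obtained from
  the point of least norm on the closed affine hyperplane {x. phi x = 1}.
*)
theory Submission
  imports Defs
begin

section \<open>Complex inner products\<close>

context complex_hilbert
begin

lemma cinner_zero_right [simp]: "cinner x 0 = 0"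
  using cinner_add_right [of x 0 0] by simp

lemma cinner_add_left: "cinner (x + y) z = cinner x z + cinner y z"
  using cinner_commute [of "x + y" z] cinner_commute [of z x] cinner_commute [of z y]
  by (simp add: cinner_add_right)

lemma cinner_zero_left [simp]: "cinner 0 x = 0"
  using cinner_add_left [of 0 0 x] by simp

lemma cinner_diff_right: "cinner x (y - z) = cinner x y - cinner x z"
  using cinner_add_right [of x "y - z" z] by (simp add: eq_diff_eq)

lemma cinner_scaleC_left: "cinner (scaleC a x) y = cnj a * cinner x y"
  using cinner_commute [of "scaleC a x" y] cinner_commute [of y x]
  by (simp add: cinner_scaleC_right)

lemma cinner_scaleR_right: "cinner x (scaleR r y) = of_real r * cinner x y"
  by (simp add: scaleR_scaleC cinner_scaleC_right)

lemma cinner_scaleR_left: "cinner (scaleR r x) y = of_real r * cinner x y"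
  by (simp add: scaleR_scaleC cinner_scaleC_left)

lemma cinner_sum_right: "cinner x (\<Sum>i\<in>A. f i) = (\<Sum>i\<in>A. cinner x (f i))"
  by (induction A rule: infinite_finite_induct) (auto simp: cinner_add_right)

lemma cinner_sum_left: "cinner (\<Sum>i\<in>A. f i) x = (\<Sum>i\<in>A. cinner (f i) x)"
  by (induction A rule: infinite_finite_induct) (auto simp: cinner_add_left)

lemma power2_norm_eq_cinner: "(norm x)\<^sup>2 = Re (cinner x x)"
  using cinner_self_norm [of x] by simp

lemma power2_norm_add: "(norm (x + y))\<^sup>2 = (norm x)\<^sup>2 + (norm y)\<^sup>2 + 2 * Re (cinner x y)"
proof -
  have "cinner (x + y) (x + y) = cinner x x + cinner y y + (cinner x y + cnj (cinner x y))"
    by (simp add: cinner_add_left cinner_add_right cinner_commute [of y x])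
  then show ?thesis
    by (simp add: power2_norm_eq_cinner)
qed

lemma parallelogram_law:
  "(norm (x + y))\<^sup>2 + (norm (x - y))\<^sup>2 = 2 * (norm x)\<^sup>2 + 2 * (norm y)\<^sup>2"
  using power2_norm_add [of x y] power2_norm_add [of x "- y"] cinner_diff_right [of x 0 y]
  by simp

lemma norm_scaleC: "norm (scaleC c x) = cmod c * norm x"
proof -
  have "cinner (scaleC c x) (scaleC c x) = (cnj c * c) * cinner x x"
    by (simp add: cinner_scaleC_left cinner_scaleC_right)
  also have "cnj c * c = of_real ((cmod c)\<^sup>2)"
    by (metis complex_norm_square mult.commute)
  finally have "(norm (scaleC c x))\<^sup>2 = (cmod c * norm x)\<^sup>2"
    by (simp add: power2_norm_eq_cinner power_mult_distrib)
  then show ?thesis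
    by (simp add: power2_eq_iff_nonneg)
qed

lemma Re_cinner_le: "Re (cinner x y) \<le> norm x * norm y"
proof -
  have "(norm (x + y))\<^sup>2 \<le> (norm x + norm y)\<^sup>2"
    by (simp add: norm_triangle_ineq power_mono)
  then show ?thesis
    by (simp add: power2_norm_add power2_sum)
qed

lemma cinner_Cauchy_Schwarz: "cmod (cinner x y) \<le> norm x * norm y"
proof -
  define c where "c = cnj (sgn (cinner x y))"
  have "cinner x (scaleC c y) = of_real (cmod (cinner x y))"
    by (cases "cinner x y = 0")
      (simp_all add: c_def cinner_scaleC_right sgn_eq mult.commute [of "cnj _"]
        complex_norm_square [symmetric] power2_eq_square)
  then have "cmod (cinner x y) = Re (cinner x (scaleC c y))"
    by simp
  also have "\<dots> \<le> norm x * norm (scaleC c y)"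
    by (rule Re_cinner_le)
  also have "\<dots> \<le> norm x * norm y"
    by (simp add: c_def norm_scaleC norm_sgn mult_left_le)
  finally show ?thesis .
qed

lemma cinner_self_eq_0_iff [simp]: "cinner x x = 0 \<longleftrightarrow> x = 0"
  using cinner_self_norm [of x] by auto

lemma cinner_ext: "(\<And>x. cinner x z = cinner x z') \<Longrightarrow> z = z'"
  using cinner_diff_right [of "z - z'" z z'] by simp

end

section \<open>Riesz representation and adjoints\<close>

lemma cinner_eq_0_if_norm_le_add:
  fixes u k :: "'a::complex_hilbert"
  assumes "\<And>t. norm u \<le> norm (u + scaleC t k)"
  shows "cinner u k = 0"
proof (rule ccontr)
  define a where "a = cinner u k"
  assume "cinner u k \<noteq> 0"
  then have a: "a \<noteq> 0" and k: "k \<noteq> 0"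
    by (auto simp: a_def)
  define t where "t = - cnj a / of_real ((norm k)\<^sup>2)"
  have re: "Re (cinner u (scaleC t k)) = - (cmod a)\<^sup>2 / (norm k)\<^sup>2"
    by (simp add: cinner_scaleC_right t_def a_def [symmetric] mult.commute [of "cnj a"]
        complex_norm_square [symmetric] flip: of_real_power)
  have "cmod t = cmod a / (norm k)\<^sup>2"
    by (simp add: t_def norm_divide norm_power)
  then have "(norm (scaleC t k))\<^sup>2 = (cmod a)\<^sup>2 / (norm k)\<^sup>2"
    using k by (simp add: norm_scaleC power_mult_distrib power_divide power2_eq_square)
  then have "(norm (u + scaleC t k))\<^sup>2 = (norm u)\<^sup>2 - (cmod a)\<^sup>2 / (norm k)\<^sup>2"
    by (simp add: power2_norm_add re)
  also have "\<dots> < (norm u)\<^sup>2"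
    using a k by simp
  finally show False
    using power_mono [OF assms [of t] norm_ge_zero, of 2] by linarith
qed

lemma closed_convex_has_min_norm:
  fixes S :: "'a::complex_hilbert set"
  assumes "closed S" "convex S" "S \<noteq> {}"
  obtains u where "u \<in> S" "\<And>w. w \<in> S \<Longrightarrow> norm u \<le> norm w"
proof -
  define d where "d = Inf (norm ` S)"
  have bdd: "bdd_below (norm ` S)"
    by (rule bdd_belowI [of _ 0]) auto
  have d_le: "d \<le> norm w" if "w \<in> S" for w
    unfolding d_def using bdd that by (auto intro: cInf_lower)
  have "d \<in> closure (norm ` S)"
    unfolding d_def using assms(3) bdd by (intro closure_contains_Inf) auto
  then obtain r where r_S: "\<forall>n. r n \<in> norm ` S" and r: "r \<longlonglongrightarrow> d"
    by (auto simp only: closure_sequential)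
  have "\<forall>n. \<exists>x. x \<in> S \<and> r n = norm x"
    using r_S by blast
  then obtain X where X: "\<forall>n. X n \<in> S \<and> r n = norm (X n)"
    using choice [of "\<lambda>n x. x \<in> S \<and> r n = norm x"] by blast
  then have XS: "\<And>n. X n \<in> S" and "r = (\<lambda>n. norm (X n))"
    by auto
  with r have normX: "(\<lambda>n. norm (X n)) \<longlonglongrightarrow> d"
    by simp
  have d_nonneg: "0 \<le> d"
    unfolding d_def using assms(3) by (intro cInf_greatest) auto
  have parallelogram: "(norm (X m - X k))\<^sup>2 \<le> 2 * (norm (X m))\<^sup>2 + 2 * (norm (X k))\<^sup>2 - 4 * d\<^sup>2"
    for m k
  proof -
    have "scaleR (1/2) (X m) + scaleR (1/2) (X k) \<in> S"
      by (rule convexD [OF assms(2) XS XS]) auto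
    then have "d \<le> norm (scaleR (1/2) (X m + X k))"
      by (intro d_le) (simp add: scaleR_right_distrib)
    then have "d \<le> norm (X m + X k) / 2"
      by simp
    then have "(2 * d)\<^sup>2 \<le> (norm (X m + X k))\<^sup>2"
      using d_nonneg by (intro power_mono) auto
    then show ?thesis
      using parallelogram_law [of "X m" "X k"] by (simp add: power_mult_distrib)
  qed
  have "Cauchy X"
  proof (rule metric_CauchyI)
    fix e :: real
    assume "0 < e"
    have "eventually (\<lambda>n. (norm (X n))\<^sup>2 < d\<^sup>2 + e\<^sup>2 / 4) sequentially"
      using order_tendstoD(2) [OF tendsto_power [OF normX, of 2], of "d\<^sup>2 + e\<^sup>2 / 4"] \<open>0 < e\<close>
      by simp
    then obtain N where N: "\<And>n. n \<ge> N \<Longrightarrow> (norm (X n))\<^sup>2 < d\<^sup>2 + e\<^sup>2 / 4"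
      by (auto simp: eventually_sequentially)
    have "dist (X m) (X k) < e" if "m \<ge> N" "k \<ge> N" for m k
    proof -
      have "(dist (X m) (X k))\<^sup>2 < e\<^sup>2"
        using parallelogram [of m k] N [OF \<open>m \<ge> N\<close>] N [OF \<open>k \<ge> N\<close>]
        unfolding dist_norm by linarith
      then show ?thesis
        by (rule power_less_imp_less_base) (use \<open>0 < e\<close> in simp)
    qed
    then show "\<exists>N. \<forall>m\<ge>N. \<forall>k\<ge>N. dist (X m) (X k) < e"
      by blast
  qed
  then obtain u where u: "X \<longlonglongrightarrow> u"
    using Cauchy_convergent_iff convergent_def by blast
  show ?thesis
  proof
    show "u \<in> S"
      using closed_sequentially [OF assms(1) XS u] .
    have "norm u = d"
      using LIMSEQ_unique [OF tendsto_norm [OF u] normX] .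
    then show "norm u \<le> norm w" if "w \<in> S" for w
      using d_le [OF that] by simp
  qed
qed

lemma riesz_representation:
  fixes phi :: "'a::complex_hilbert \<Rightarrow> complex"
  assumes add: "\<And>x y. phi (x + y) = phi x + phi y"
    and hom: "\<And>c x. phi (scaleC c x) = c * phi x"
    and bound: "\<And>x. cmod (phi x) \<le> norm x * K"
  obtains z where "\<And>x. phi x = cinner z x"
proof (cases "\<forall>x. phi x = 0")
  case True
  then show ?thesis
    using that [of 0] by simp
next
  case False
  then obtain x0 where x0: "phi x0 \<noteq> 0"
    by blast
  have diff: "phi (x - y) = phi x - phi y" for x y
    using add [of "x - y" y] by simp
  have scale: "phi (scaleR r x) = of_real r * phi x" for r x
    by (simp add: scaleR_scaleC hom)
  define S where "S = {x. phi x = 1}"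
  have "\<bar>K\<bar>-lipschitz_on UNIV phi"
  proof (rule lipschitz_onI)
    fix x y :: 'a
    have "dist (phi x) (phi y) \<le> norm (x - y) * K"
      using bound [of "x - y"] by (simp add: dist_norm diff)
    also have "\<dots> \<le> \<bar>K\<bar> * dist x y"
      using mult_right_mono [OF abs_ge_self [of K] norm_ge_zero [of "x - y"]]
      by (simp add: dist_norm mult.commute)
    finally show "dist (phi x) (phi y) \<le> \<bar>K\<bar> * dist x y" .
  qed simp
  then have "closed S"
    unfolding S_def by (rule closed_Collect_eq [OF lipschitz_on_continuous_on continuous_on_const])
  moreover have "convex S"
    unfolding S_def convex_def by (auto simp: add scale simp flip: of_real_add)
  moreover have "scaleC (1 / phi x0) x0 \<in> S"
    using x0 by (simp add: S_def hom)
  ultimately obtain u where "u \<in> S" and u_min: "\<And>w. w \<in> S \<Longrightarrow> norm u \<le> norm w"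
    using closed_convex_has_min_norm by blast
  then have u: "phi u = 1"
    by (simp add: S_def)
  have orth: "cinner u k = 0" if "phi k = 0" for k
    using that u by (intro cinner_eq_0_if_norm_le_add u_min) (simp add: S_def add hom)
  have "u \<noteq> 0"
    using u add [of 0 0] by auto
  show ?thesis
  proof (rule that)
    fix x
    have "cinner u (x - scaleC (phi x) u) = 0"
      by (rule orth) (simp add: diff hom u)
    then have "cinner u x = phi x * of_real ((norm u)\<^sup>2)"
      by (simp add: cinner_diff_right cinner_scaleC_right cinner_self_norm)
    then show "phi x = cinner (scaleC (of_real (1 / (norm u)\<^sup>2)) u) x"
      using \<open>u \<noteq> 0\<close> by (simp add: cinner_scaleC_left)
  qed
qed

lemma cadjoint_eqI:
  assumes "\<And>x. cinner (f x) y = cinner x z"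
  shows "cadjoint f y = z"
  unfolding cadjoint_def
proof (rule the_equality)
  show "\<forall>x. cinner (f x) y = cinner x z"
    using assms by simp
  show "z' = z" if "\<forall>x. cinner (f x) y = cinner x z'" for z'
    using that assms by (intro cinner_ext) simp
qed

lemma bounded_clinear_add: "bounded_clinear f \<Longrightarrow> f (x + y) = f x + f y"
  unfolding bounded_clinear_def by blast

lemma bounded_clinear_scaleC: "bounded_clinear f \<Longrightarrow> f (scaleC c x) = scaleC c (f x)"
  unfolding bounded_clinear_def by blast

lemma bounded_clinear_scaleR: "bounded_clinear f \<Longrightarrow> f (scaleR r x) = scaleR r (f x)"
  by (simp add: scaleR_scaleC bounded_clinear_scaleC)

lemma bounded_clinear_zero: "bounded_clinear f \<Longrightarrow> f 0 = 0"
  using bounded_clinear_add [of f 0 0] by simp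

lemma bounded_clinear_sum: "bounded_clinear f \<Longrightarrow> f (\<Sum>i\<in>A. g i) = (\<Sum>i\<in>A. f (g i))"
  by (induction A rule: infinite_finite_induct) (simp_all add: bounded_clinear_zero bounded_clinear_add)

lemma cinner_cadjoint_left:
  assumes "bounded_clinear f"
  shows "cinner y (f x) = cinner (cadjoint f y) x"
proof -
  obtain K where K: "\<And>x. norm (f x) \<le> norm x * K"
    using assms unfolding bounded_clinear_def by blast
  have "cinner y (f (a + b)) = cinner y (f a) + cinner y (f b)" for a b
    by (simp add: assms bounded_clinear_add cinner_add_right)
  moreover have "cinner y (f (scaleC c a)) = c * cinner y (f a)" for c a
    by (simp add: assms bounded_clinear_scaleC cinner_scaleC_right)
  moreover have "cmod (cinner y (f a)) \<le> norm a * (norm y * K)" for a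
    using cinner_Cauchy_Schwarz [of y "f a"] mult_left_mono [OF K [of a], of "norm y"]
    by (simp add: ac_simps)
  ultimately obtain z where z: "\<And>x. cinner y (f x) = cinner z x"
    using riesz_representation [of "\<lambda>x. cinner y (f x)" "norm y * K"] by blast
  moreover have "cadjoint f y = z"
    using z by (intro cadjoint_eqI) (metis cinner_commute)
  ultimately show ?thesis
    by simp
qed

lemma cinner_cadjoint_right: "bounded_clinear f \<Longrightarrow> cinner (f x) y = cinner x (cadjoint f y)"
  using cinner_cadjoint_left [of f y x] by (metis cinner_commute)

lemma cadjoint_sum:
  assumes "\<And>i. i \<in> A \<Longrightarrow> bounded_clinear (f i)"
  shows "cadjoint (\<lambda>x. \<Sum>i\<in>A. f i x) y = (\<Sum>i\<in>A. cadjoint (f i) y)"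
  using assms by (intro cadjoint_eqI) (simp add: cinner_sum_left cinner_sum_right cinner_cadjoint_right)

section \<open>Positive semidefinite matrices\<close>

lemma psd_matD: "psd_mat n C \<Longrightarrow> 0 \<le> (\<Sum>i<n. \<Sum>j<n. x i * C i j * x j)"
  unfolding psd_mat_def by blast

lemma sum_square_lessThan_Suc:
  fixes F :: "nat \<Rightarrow> nat \<Rightarrow> 'a::comm_monoid_add"
  shows "(\<Sum>i<Suc m. \<Sum>j<Suc m. F i j) =
    (\<Sum>i<m. \<Sum>j<m. F i j) + (\<Sum>i<m. F i m) + (\<Sum>j<m. F m j) + F m m"
  by (simp add: sum.distrib ac_simps)

lemma psd_mat_SucD: "psd_mat (Suc m) C \<Longrightarrow> psd_mat m C"
  unfolding psd_mat_def
proof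
  fix x :: "nat \<Rightarrow> real"
  assume "\<forall>x. 0 \<le> (\<Sum>i<Suc m. \<Sum>j<Suc m. x i * C i j * x j)"
  then have "0 \<le> (\<Sum>i<Suc m. \<Sum>j<Suc m. (x(m := 0)) i * C i j * (x(m := 0)) j)"
    by blast
  then show "0 \<le> (\<Sum>i<m. \<Sum>j<m. x i * C i j * x j)"
    by simp
qed

lemma psd_mat_two_entries:
  assumes "psd_mat n C" "i < n" "j < n"
  shows "0 \<le> a * a * C i i + a * b * (C i j + C j i) + b * b * C j j"
proof -
  define x where "x k = (if k = i then a else 0) + (if k = j then b else 0)" for k
  have mult_delta: "c * (if P then u else 0) = (if P then c * u else 0)" for c u :: real and P
    by simp
  have "(\<Sum>q<n. C p q * x q) = a * C p i + b * C p j" for p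
    using assms(2,3) by (simp add: x_def distrib_left sum.distrib mult_delta)
  then have "(\<Sum>p<n. \<Sum>q<n. x p * C p q * x q) = (\<Sum>p<n. x p * (a * C p i + b * C p j))"
    by (simp add: mult.assoc flip: sum_distrib_left)
  also have "\<dots> = a * a * C i i + a * b * (C i j + C j i) + b * b * C j j"
    using assms(2,3) by (simp add: x_def algebra_simps sum.distrib mult_delta)
  finally show ?thesis
    using psd_matD [OF assms(1), of x] by simp
qed

lemma psd_mat_diag_nonneg: "psd_mat n C \<Longrightarrow> i < n \<Longrightarrow> 0 \<le> C i i"
  using psd_mat_two_entries [of n C i i 1 0] by simp

lemma psd_mat_zero_diag:
  assumes "psd_mat n C" "i < n" "j < n" "C i j = C j i" "C j j = 0"
  shows "C i j = 0"
proof (rule ccontr)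
  assume "C i j \<noteq> 0"
  have "0 \<le> C i i + 2 * b * C i j" for b
    using psd_mat_two_entries [OF assms(1-3), of 1 b] assms(4,5) by simp
  from this [of "- (C i i + 1) / (2 * C i j)"] and \<open>C i j \<noteq> 0\<close> show False
    by (simp add: field_simps)
qed

lemma psd_mat_schur_complement:
  assumes psd: "psd_mat (Suc m) C" and sym: "\<And>j. j < m \<Longrightarrow> C m j = C j m"
  shows "psd_mat m (\<lambda>i j. C i j - C i m * C j m / C m m)"
  unfolding psd_mat_def
proof
  fix x :: "nat \<Rightarrow> real"
  define c where "c = C m m"
  define s where "s = (\<Sum>i<m. x i * C i m)"
  define y where "y = x(m := - s / c)"
  have "(\<Sum>j<m. y m * C m j * y j) = y m * s"
    unfolding s_def sum_distrib_left using sym by (intro sum.cong) (auto simp: y_def)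
  moreover have "(\<Sum>i<m. y i * C i m * y m) = s * y m"
    unfolding s_def sum_distrib_right by (intro sum.cong) (auto simp: y_def)
  moreover have "y m * C m m * y m = s * s / c"
    by (cases "c = 0") (simp_all add: y_def c_def)
  ultimately have "(\<Sum>i<Suc m. \<Sum>j<Suc m. y i * C i j * y j) =
      (\<Sum>i<m. \<Sum>j<m. x i * C i j * x j) - s * s / c"
    unfolding sum_square_lessThan_Suc by (simp add: y_def)
  also have "s * s = (\<Sum>i<m. \<Sum>j<m. (x i * C i m) * (x j * C j m))"
    by (simp add: s_def sum_product)
  also have "(\<Sum>i<m. \<Sum>j<m. x i * C i j * x j) - \<dots> / c =
      (\<Sum>i<m. \<Sum>j<m. x i * (C i j - C i m * C j m / c) * x j)"
    by (simp add: algebra_simps sum_subtractf sum_divide_distrib)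
  finally show "0 \<le> (\<Sum>i<m. \<Sum>j<m. x i * (C i j - C i m * C j m / C m m) * x j)"
    using psd_matD [OF psd, of y] by (simp add: c_def)
qed

lemma psd_mat_frobenius_nonneg:
  assumes "\<And>i j. i < n \<Longrightarrow> j < n \<Longrightarrow> C i j = C j i" "psd_mat n C" "psd_mat n G"
  shows "0 \<le> (\<Sum>i<n. \<Sum>j<n. C i j * G i j)"
  using assms
proof (induction n arbitrary: C)
  case 0
  then show ?case by simp
next
  case (Suc m)
  have sym: "C i j = C j i" if "i < Suc m" "j < Suc m" for i j
    using Suc.prems(1) that .
  define c where "c = C m m"
  define v where "v i = C i m" for i
  define C' where "C' = (\<lambda>i j. C i j - v i * v j / c)"
  have "0 \<le> c"
    unfolding c_def using psd_mat_diag_nonneg [OF Suc.prems(2)] by simp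
  have v_zero: "v i = 0" if "c = 0" "i < m" for i
    unfolding v_def using psd_mat_zero_diag [OF Suc.prems(2), of i m] sym [of i m] that
    by (simp add: c_def)
  \<comment> \<open>\<open>C = C' + v v\<^sup>T / c\<close> with \<open>C'\<close> zero on the last row and column; for \<open>c = 0\<close> this is
    because \<open>v = 0\<close> there (and \<open>C' = C\<close>, as \<open>x / 0 = 0\<close>).\<close>
  have C'_last: "C' i m = 0" "C' m i = 0" if "i < Suc m" for i
    using sym [of m i] v_zero [of i] that
    by (cases "c = 0"; cases "i = m"; simp add: C'_def v_def c_def)+
  have "psd_mat m C'"
    using psd_mat_schur_complement [OF Suc.prems(2)] sym by (simp add: C'_def v_def c_def)
  moreover have "C' i j = C' j i" if "i < m" "j < m" for i j
    using sym [of i j] that by (simp add: C'_def mult.commute)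
  ultimately have IH: "0 \<le> (\<Sum>i<m. \<Sum>j<m. C' i j * G i j)"
    using Suc.IH [of C'] psd_mat_SucD [OF Suc.prems(3)] by blast
  have "(\<Sum>i<Suc m. \<Sum>j<Suc m. C i j * G i j) =
      (\<Sum>i<Suc m. \<Sum>j<Suc m. C' i j * G i j) + (\<Sum>i<Suc m. \<Sum>j<Suc m. v i * G i j * v j) / c"
    by (simp add: C'_def algebra_simps sum.distrib sum_subtractf sum_divide_distrib add_divide_distrib)
  also have "(\<Sum>i<Suc m. \<Sum>j<Suc m. C' i j * G i j) = (\<Sum>i<m. \<Sum>j<m. C' i j * G i j)"
    unfolding sum_square_lessThan_Suc using C'_last by simp
  finally show ?case
    using IH psd_matD [OF Suc.prems(3), of v] \<open>0 \<le> c\<close> by simp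
qed

lemma beta_set_diag_sum_le:
  assumes "\<beta> \<in> beta_set n" "psd_mat n G"
  shows "(\<Sum>i<n. \<beta> i * G i i) \<le> (\<Sum>i<n. \<Sum>j<n. G i j)"
proof -
  have "0 \<le> (\<Sum>i<n. \<Sum>j<n. (1 - (if i = j then \<beta> i else 0)) * G i j)"
    using assms by (intro psd_mat_frobenius_nonneg) (auto simp: beta_set_def)
  also have "\<dots> = (\<Sum>i<n. \<Sum>j<n. G i j) - (\<Sum>i<n. \<beta> i * G i i)"
    by (simp add: left_diff_distrib sum_subtractf if_distrib [of "\<lambda>t. t * _"] cong: if_cong)
  finally show ?thesis
    by simp
qed

section \<open>Positive operators and the set B_n\<close>

lemma positive_opD:
  "positive_op T \<Longrightarrow> Im (cinner x (T x)) = 0"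
  "positive_op T \<Longrightarrow> 0 \<le> Re (cinner x (T x))"
  unfolding positive_op_def by blast+

lemma psd_mat_gram:
  assumes "positive_op T" "bounded_clinear T"
  shows "psd_mat n (\<lambda>i j. Re (cinner (z i) (T (z j))))"
  unfolding psd_mat_def
proof
  fix x :: "nat \<Rightarrow> real"
  define u where "u = (\<Sum>i<n. scaleR (x i) (z i))"
  have "Re (cinner u (T u)) = (\<Sum>i<n. \<Sum>j<n. x i * Re (cinner (z i) (T (z j))) * x j)"
    unfolding u_def bounded_clinear_sum [OF assms(2)] cinner_sum_left
    unfolding cinner_sum_right
    by (simp add: assms(2) bounded_clinear_scaleR cinner_scaleR_left cinner_scaleR_right Re_sum
        mult_ac)
  then show "0 \<le> (\<Sum>i<n. \<Sum>j<n. x i * Re (cinner (z i) (T (z j))) * x j)"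
    using positive_opD(2) [OF assms(1)] by metis
qed

lemma beta_set_quadratic_form_le:
  assumes "\<beta> \<in> beta_set n" "positive_op T" "bounded_clinear T"
  shows "(\<Sum>i<n. \<beta> i * Re (cinner (z i) (T (z i)))) \<le> Re (cinner (\<Sum>i<n. z i) (T (\<Sum>i<n. z i)))"
  using beta_set_diag_sum_le [OF assms(1) psd_mat_gram [OF assms(2,3)]]
  unfolding bounded_clinear_sum [OF assms(3)] cinner_sum_left
  unfolding cinner_sum_right Re_sum .

theorem lemma2:
  fixes n :: nat and \<beta> :: "nat \<Rightarrow> real"
    and M :: "nat \<Rightarrow> 'a::complex_hilbert \<Rightarrow> 'b::complex_hilbert"
    and \<rho> :: "'a \<Rightarrow> 'a"
  assumes "n \<ge> 2"
    and "\<beta> \<in> beta_set n"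
    and "\<forall>i<n. bounded_clinear (M i)"
    and "pos_trace_class \<rho>"
  shows "loewner_le
           (\<lambda>y. \<Sum>i<n. scaleR (\<beta> i) (M i (\<rho> (cadjoint (M i) y))))
           (\<lambda>y. (\<lambda>x. \<Sum>i<n. M i x) (\<rho> (cadjoint (\<lambda>x. \<Sum>i<n. M i x) y)))"
  unfolding loewner_le_def positive_op_def
proof
  fix y :: 'b
  have M: "\<And>i. i < n \<Longrightarrow> bounded_clinear (M i)" and \<rho>: "bounded_clinear \<rho>" "positive_op \<rho>"
    using assms(3,4) unfolding pos_trace_class_def by auto
  define z where "z i = cadjoint (M i) y" for i
  define w where "w = (\<Sum>i<n. z i)"
  have adj_sum: "cadjoint (\<lambda>x. \<Sum>i<n. M i x) y = w"
    unfolding w_def z_def using M by (intro cadjoint_sum) simp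
  have "cinner y ((\<lambda>x. \<Sum>i<n. M i x) (\<rho> (cadjoint (\<lambda>x. \<Sum>i<n. M i x) y))
        - (\<Sum>i<n. scaleR (\<beta> i) (M i (\<rho> (cadjoint (M i) y))))) =
      cinner w (\<rho> w) - (\<Sum>i<n. of_real (\<beta> i) * cinner (z i) (\<rho> (z i)))"
    (is "cinner y ?D = _")
    unfolding adj_sum w_def z_def
    by (simp add: cinner_diff_right cinner_sum_right cinner_sum_left cinner_scaleR_right M
        cinner_cadjoint_left)
  moreover have "(\<Sum>i<n. \<beta> i * Re (cinner (z i) (\<rho> (z i)))) \<le> Re (cinner w (\<rho> w))"
    unfolding w_def using assms(2) \<rho>(2,1) by (rule beta_set_quadratic_form_le)
  ultimately show "Im (cinner y ?D) = 0 \<and> 0 \<le> Re (cinner y ?D)"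
    using positive_opD [OF \<rho>(2)] by (simp add: Im_sum Re_sum)
qed

end
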